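(* Let $s,d$ be integers with $1\le s$ and $d\ge 2s$. There is a constant $C$ depending only on $d$ such that the following holds for all $n\ge 2(d+1)$ and all real $K\ge 0$: if $\mathcal F\subseteq\binom{[n]}{d+1}$ is an $s$-witness family with $|\mathcal F|\ge\binom{n-1}{d}-Kn^{d-1}$, then there exists $x_0\in[n]$ such that the star $\mathcal F^*=\{F^*\in\binom{[n]}{d+1}: x_0\in F^*\}$ satisfies $|\mathcal F\triangle\mathcal F^*|\le C(K+1)n^{d-1}$.
   Context: $[n]=\{1,\dots,n\}$ and $\binom{[n]}{d+1}$ denotes the family of all $(d+1)$-element subsets of $[n]$; $\triangle$ denotes symmetric difference. For $n\ge d+1$ and $0\le s\le d$, a family $\mathcal F\subseteq\binom{[n]}{d+1}$ is an $s$-witness family if for every $F\in\mathcal F$ there exists $B_F\subseteq F$ with $|B_F|=s$ such that $F\cap F'\neq B_F$ for every $F'\in\mathcal F$. *)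

theory Defs
  imports Complex_Main
begin

definition s_witness_family :: "nat \<Rightarrow> nat set set \<Rightarrow> bool" where
  "s_witness_family s \<F> \<longleftrightarrow>
     (\<forall>F\<in>\<F>. \<exists>B. B \<subseteq> F \<and> card B = s \<and> (\<forall>F'\<in>\<F>. F \<inter> F' \<noteq> B))"

end

theory Submission
  imports Defs
begin

text \<open>
  Call a \<open>d\<close>-set open if one of its \<open>s\<close>-subsets forces a point outside it (every member
  containing the \<open>s\<close>-set contains the point); an open \<open>d\<close>-set lies in at most one member.
  Members without open facets (\<open>d\<close>-subsets) are few, since the witness of such a member forces
  two further points. Double counting incidences between members and their facets shows that a
  family of size close to \<open>(n - 1) choose d\<close> has few bad open \<open>d\<close>-sets (those that are not the
  only open facet of a member), hence few members with two open facets. A member whose only open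
  facet is \<open>F - {x}\<close> contains a source of \<open>x\<close>, an \<open>s\<close>-set forcing \<open>x\<close>. Disjoint sources of
  distinct points extend to many distinct bad \<open>d\<close>-sets, so unless \<open>n\<close> is small compared with
  \<open>K\<close>, almost all sources belong to the point \<open>x\<^sub>0\<close> with the most sources, and only
  \<open>O((K + 1) n ^ (d - 1))\<close> members avoid \<open>x\<^sub>0\<close>.
\<close>

lemma card_supersets_eq:
  assumes "finite A" "B \<subseteq> A" "card B \<le> k"
  shows "card {G. G \<subseteq> A \<and> card G = k \<and> B \<subseteq> G} = (card A - card B) choose (k - card B)"
proof -
  have fin_B: "finite B" using assms finite_subset by blast
  have "bij_betw (\<lambda>X. X \<union> B) {X. X \<subseteq> A - B \<and> card X = k - card B} {G. G \<subseteq> A \<and> card G = k \<and> B \<subseteq> G}"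
  proof (rule bij_betw_byWitness[where f' = "\<lambda>G. G - B"])
    show "(\<lambda>X. X \<union> B) ` {X. X \<subseteq> A - B \<and> card X = k - card B} \<subseteq> {G. G \<subseteq> A \<and> card G = k \<and> B \<subseteq> G}"
    proof safe
      fix X assume X: "X \<subseteq> A - B" "card X = k - card B"
      then have "finite X" "X \<inter> B = {}" using assms(1) finite_subset by blast+
      then show "card (X \<union> B) = k" using X assms fin_B by (simp add: card_Un_disjoint)
    qed (use assms in auto)
    show "(\<lambda>G. G - B) ` {G. G \<subseteq> A \<and> card G = k \<and> B \<subseteq> G} \<subseteq> {X. X \<subseteq> A - B \<and> card X = k - card B}"
      using fin_B by (auto simp: card_Diff_subset)
  qed auto
  then have "card {G. G \<subseteq> A \<and> card G = k \<and> B \<subseteq> G} = card {X. X \<subseteq> A - B \<and> card X = k - card B}"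
    by (simp add: bij_betw_same_card)
  also have "\<dots> = (card A - card B) choose (k - card B)"
    using assms fin_B by (simp add: n_subsets card_Diff_subset)
  finally show ?thesis .
qed

lemma card_supersets_le:
  assumes "finite A"
  shows "card {G. G \<subseteq> A \<and> card G = k \<and> B \<subseteq> G} \<le> card A ^ (k - card B)"
proof (cases "B \<subseteq> A \<and> card B \<le> k")
  case True
  have "(card A - card B) choose (k - card B) \<le> (card A - card B) ^ (k - card B)"
    by (cases "k - card B \<le> card A - card B") (auto simp: binomial_le_pow binomial_eq_0)
  also have "\<dots> \<le> card A ^ (k - card B)" by (simp add: power_mono)
  finally show ?thesis using card_supersets_eq[OF assms] True by simp
next
  case False
  then have "{G. G \<subseteq> A \<and> card G = k \<and> B \<subseteq> G} = {}"
    using assms by (auto dest: card_mono[rotated] intro: finite_subset)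
  then show ?thesis by (metis card.empty le0)
qed

lemma card_meeting_subsets_le:
  assumes "finite A" "finite S"
  shows "card {G. G \<subseteq> A \<and> card G = k \<and> G \<inter> S \<noteq> {}} \<le> card S * card A ^ (k - 1)"
proof -
  have "{G. G \<subseteq> A \<and> card G = k \<and> G \<inter> S \<noteq> {}} = (\<Union>z\<in>S. {G. G \<subseteq> A \<and> card G = k \<and> {z} \<subseteq> G})"
    by blast
  then have "card {G. G \<subseteq> A \<and> card G = k \<and> G \<inter> S \<noteq> {}}
      \<le> (\<Sum>z\<in>S. card {G. G \<subseteq> A \<and> card G = k \<and> {z} \<subseteq> G})"
    using card_UN_le[OF assms(2)] by simp
  also have "\<dots> \<le> (\<Sum>z\<in>S. card A ^ (k - 1))"
  proof (rule sum_mono)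
    show "card {G. G \<subseteq> A \<and> card G = k \<and> {z} \<subseteq> G} \<le> card A ^ (k - 1)" for z
      using card_supersets_le[OF assms(1), of k "{z}"] by simp
  qed
  finally show ?thesis by simp
qed

lemma binomial_ge_pow_scaled:
  fixes c :: real
  assumes "j \<le> a" "real n * real j \<le> c * real a" "c > 0"
  shows "real n ^ j \<le> c ^ j * real (a choose j)"
proof (cases "j = 0")
  case False
  have "(real n / c) ^ j \<le> (real a / real j) ^ j"
    using assms False by (intro power_mono) (auto simp: field_simps)
  also have "\<dots> \<le> real (a choose j)" by (rule binomial_ge_n_over_k_pow_k[OF assms(1)])
  finally show ?thesis using assms(3) by (simp add: field_simps)
qed simp

lemma insert_eq_of_card_Suc:
  assumes "finite F" "H \<subseteq> F" "u \<in> F" "u \<notin> H" "card F = Suc (card H)"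
  shows "F = insert u H"
  using assms by (metis card_insert_disjoint card_subset_eq finite_subset insert_subsetI)

section \<open>Open facets\<close>

locale s_witness_setting =
  fixes n d s :: nat and FF :: "nat set set"
  assumes s_pos: "1 \<le> s" and d_ge: "2 * s \<le> d" and n_ge: "2 * (d + 1) \<le> n"
    and FF_sub: "FF \<subseteq> {F. F \<subseteq> {1..n} \<and> card F = d + 1}"
    and witness_family: "s_witness_family s FF"
begin

definition forces :: "nat set \<Rightarrow> nat \<Rightarrow> bool" where
  "forces B u \<longleftrightarrow> (\<forall>F\<in>FF. B \<subseteq> F \<longrightarrow> u \<in> F)"

definition is_open :: "nat set \<Rightarrow> bool" where
  "is_open H \<longleftrightarrow> (\<exists>B u. B \<subseteq> H \<and> card B = s \<and> u \<notin> H \<and> forces B u)"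

definition open_facets :: "nat set \<Rightarrow> nat set set" where
  "open_facets F = {H. H \<subseteq> F \<and> card H = d \<and> is_open H}"

definition closed_facets :: "nat set \<Rightarrow> nat set set" where
  "closed_facets F = {H. H \<subseteq> F \<and> card H = d \<and> \<not> is_open H}"

definition "D0 = {F\<in>FF. open_facets F = {}}"
definition "D1 = {F\<in>FF. card (open_facets F) = 1}"
definition "D2 = {F\<in>FF. 2 \<le> card (open_facets F)}"

definition "open_dsets = {H. H \<subseteq> {1..n} \<and> card H = d \<and> is_open H}"
definition "closed_dsets = {H. H \<subseteq> {1..n} \<and> card H = d \<and> \<not> is_open H}"
definition "good = \<Union> (open_facets ` D1)"
definition "bad = open_dsets - good"

definition sources :: "nat \<Rightarrow> nat set set" where
  "sources x = {B. card B = s \<and> x \<notin> B \<and> forces B x \<and> (\<exists>F\<in>D1. B \<subseteq> F)}"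

definition "total_sources = (\<Sum>y\<in>{1..n}. card (sources y))"

lemma FF_memberD:
  assumes "F \<in> FF" shows "F \<subseteq> {1..n}" "card F = d + 1" "finite F"
  using assms FF_sub finite_subset[of F "{1..n}"] by auto

lemma finite_FF: "finite FF"
  by (rule finite_subset[OF FF_sub], rule finite_subset[of _ "Pow {1..n}"]) auto

lemma D_subset_FF: "D0 \<subseteq> FF" "D1 \<subseteq> FF" "D2 \<subseteq> FF"
  unfolding D0_def D1_def D2_def by auto

lemma finite_D: "finite D0" "finite D1" "finite D2"
  using D_subset_FF finite_subset[OF _ finite_FF] by auto

lemma finite_open_facets: "finite F \<Longrightarrow> finite (open_facets F)"
  unfolding open_facets_def by (rule finite_subset[of _ "Pow F"]) auto

lemma finite_open_dsets: "finite open_dsets"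
  and finite_closed_dsets: "finite closed_dsets"
  unfolding open_dsets_def closed_dsets_def by (auto intro: finite_subset[of _ "Pow {1..n}"])

lemma finite_bad: "finite bad"
  unfolding bad_def using finite_open_dsets by simp

lemma bad_memberD:
  assumes "G \<in> bad" shows "card G = d" "finite G"
  using assms finite_subset[of G "{1..n}"] unfolding bad_def open_dsets_def by auto

lemma open_facet_unique:
  assumes "is_open H" "card H = d" "H \<subseteq> F1" "H \<subseteq> F2" "F1 \<in> FF" "F2 \<in> FF"
  shows "F1 = F2"
proof -
  obtain B u where B: "B \<subseteq> H" "card B = s" "u \<notin> H" "forces B u"
    using assms(1) is_open_def by blast
  have "F = insert u H" if "F \<in> FF" "H \<subseteq> F" for F
  proof (rule insert_eq_of_card_Suc)
    show "u \<in> F" using B that unfolding forces_def by blast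
  qed (use that B assms(2) FF_memberD in auto)
  then have "F1 = insert u H" "F2 = insert u H" using assms(3-6) by blast+
  then show ?thesis by simp
qed

lemma open_facets_disjoint:
  "F1 \<in> FF \<Longrightarrow> F2 \<in> FF \<Longrightarrow> F1 \<noteq> F2 \<Longrightarrow> open_facets F1 \<inter> open_facets F2 = {}"
  unfolding open_facets_def using open_facet_unique by blast

lemma open_facets_subset: "F \<in> FF \<Longrightarrow> open_facets F \<subseteq> open_dsets"
  unfolding open_facets_def open_dsets_def using FF_memberD by blast

lemma forces_open_facet:
  assumes "F \<in> FF" "B \<subseteq> F" "card B = s" "u \<notin> B" "forces B u"
  shows "u \<in> F" "F - {u} \<in> open_facets F"
proof -
  show u: "u \<in> F" using assms unfolding forces_def by auto
  have "is_open (F - {u})" unfolding is_open_def using assms by blast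
  then show "F - {u} \<in> open_facets F"
    unfolding open_facets_def using FF_memberD[OF assms(1)] u by auto
qed

lemma open_facetE:
  assumes "F \<in> FF" "H \<in> open_facets F"
  obtains u B where "u \<in> F" "H = F - {u}" "B \<subseteq> H" "card B = s" "forces B u"
proof -
  obtain B u where B: "B \<subseteq> H" "card B = s" "u \<notin> H" "forces B u"
    using assms(2) unfolding open_facets_def is_open_def by blast
  have H: "H \<subseteq> F" "card H = d" using assms(2) unfolding open_facets_def by auto
  have u: "u \<in> F" using B H assms(1) unfolding forces_def by blast
  then have "F = insert u H"
    using insert_eq_of_card_Suc[of F H u] FF_memberD[OF assms(1)] H B by simp
  then show ?thesis using that u B by blast
qed

lemma D1_forced_point_unique:
  assumes "F \<in> D1"
    and "B \<subseteq> F" "card B = s" "u \<notin> B" "forces B u"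
    and "B' \<subseteq> F" "card B' = s" "u' \<notin> B'" "forces B' u'"
  shows "u = u'"
proof -
  have F: "F \<in> FF" "card (open_facets F) = 1" using assms(1) D1_def by auto
  obtain H where "open_facets F = {H}" using F(2) card_1_singletonE by blast
  moreover note forces_open_facet[OF F(1) assms(2-5)] forces_open_facet[OF F(1) assms(6-9)]
  ultimately have "F - {u} = F - {u'}" "u \<in> F" "u' \<in> F" by auto
  then show ?thesis by blast
qed

lemma D1_sourceE:
  assumes "F \<in> D1"
  obtains x B where "x \<in> F" "B \<in> sources x" "B \<subseteq> F"
proof -
  have F: "F \<in> FF" "card (open_facets F) = 1" using assms D1_def by auto
  then obtain H where "H \<in> open_facets F" using card_1_singletonE by blast
  then obtain u B where uB: "u \<in> F" "H = F - {u}" "B \<subseteq> H" "card B = s" "forces B u"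
    using open_facetE F(1) by blast
  then have "B \<in> sources u" "B \<subseteq> F" unfolding sources_def using assms by auto
  then show ?thesis using that uB(1) by blast
qed

lemma sources_disjoint:
  assumes "x \<noteq> y" shows "sources x \<inter> sources y = {}"
proof (rule ccontr)
  assume "sources x \<inter> sources y \<noteq> {}"
  then obtain F B where FB: "F \<in> D1" "B \<subseteq> F" "card B = s"
    "x \<notin> B" "forces B x" "y \<notin> B" "forces B y"
    unfolding sources_def by blast
  have "x = y" by (rule D1_forced_point_unique[OF FB(1-5) FB(2,3,6,7)])
  with assms show False ..
qed

lemma sources_memberD:
  assumes "B \<in> sources x" shows "B \<subseteq> {1..n}" "card B = s"
proof -
  obtain F where "F \<in> D1" "B \<subseteq> F" "card B = s" using assms unfolding sources_def by blast
  moreover have "F \<subseteq> {1..n}" using \<open>F \<in> D1\<close> D_subset_FF(2) FF_memberD(1) by blast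
  ultimately show "B \<subseteq> {1..n}" "card B = s" by auto
qed

lemma finite_sources: "finite (sources x)"
  by (rule finite_subset[of _ "Pow {1..n}"]) (use sources_memberD(1) in auto)

section \<open>Members without open facets\<close>

definition witness :: "nat set \<Rightarrow> nat set" where
  "witness F = (SOME B. B \<subseteq> F \<and> card B = s \<and> (\<forall>F'\<in>FF. F \<inter> F' \<noteq> B))"

lemma witnessD:
  assumes "F \<in> FF"
  shows "witness F \<subseteq> F" "card (witness F) = s" "\<And>F'. F' \<in> FF \<Longrightarrow> F \<inter> F' \<noteq> witness F"
proof -
  have "\<exists>B. B \<subseteq> F \<and> card B = s \<and> (\<forall>F'\<in>FF. F \<inter> F' \<noteq> B)"
    using witness_family assms unfolding s_witness_family_def by blast
  then have "witness F \<subseteq> F \<and> card (witness F) = s \<and> (\<forall>F'\<in>FF. F \<inter> F' \<noteq> witness F)"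
    unfolding witness_def by (rule someI_ex)
  then show "witness F \<subseteq> F" "card (witness F) = s" "\<And>F'. F' \<in> FF \<Longrightarrow> F \<inter> F' \<noteq> witness F"
    by auto
qed

text \<open>Since \<open>F \<in> D0\<close> has no open facet, no \<open>u \<in> F - B\<close> is forced by its witness \<open>B\<close>, so
  some member \<open>f u \<supseteq> B\<close> avoids \<open>u\<close>. A member with witness \<open>B\<close> meets both \<open>F\<close> and \<open>f u\<close>
  outside \<open>B\<close>, hence contains \<open>B\<close> and two further prescribed points.\<close>

lemma card_same_witness_le:
  assumes "F \<in> D0"
  shows "card {G\<in>FF. witness G = witness F} \<le> (d + 1 - s) * (d + 1 - s) * n ^ (d - s - 1)"
proof -
  define B where "B = witness F"
  have F: "F \<in> FF" "open_facets F = {}" using assms D0_def by auto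
  have B: "B \<subseteq> F" "card B = s" "finite B"
    using witnessD[OF F(1)] FF_memberD[OF F(1)] finite_subset unfolding B_def by auto
  have "\<exists>F'\<in>FF. B \<subseteq> F' \<and> u \<notin> F'" if u: "u \<in> F - B" for u
    using forces_open_facet[OF F(1) B(1,2), of u] u F(2) unfolding forces_def by blast
  then obtain f where f: "\<And>u. u \<in> F - B \<Longrightarrow> f u \<in> FF \<and> B \<subseteq> f u \<and> u \<notin> f u"
    by metis
  let ?S = "\<lambda>u g. {G. G \<subseteq> {1..n} \<and> card G = d + 1 \<and> insert u (insert g B) \<subseteq> G}"
  have cover: "{G\<in>FF. witness G = B} \<subseteq> (\<Union>u\<in>F - B. \<Union>g\<in>f u - B. ?S u g)"
  proof
    fix G assume "G \<in> {G\<in>FF. witness G = B}"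
    then have G: "G \<in> FF" "B \<subseteq> G" "\<And>F'. F' \<in> FF \<Longrightarrow> G \<inter> F' \<noteq> B"
      using witnessD by auto
    obtain u where u: "u \<in> G" "u \<in> F - B" using G(2) G(3)[of F] F(1) B(1) by blast
    obtain g where g: "g \<in> G" "g \<in> f u - B" using G(2) G(3)[of "f u"] f[OF u(2)] by blast
    show "G \<in> (\<Union>u\<in>F - B. \<Union>g\<in>f u - B. ?S u g)"
      using u g G(2) FF_memberD[OF G(1)] by blast
  qed
  have card_S: "card (?S u g) \<le> n ^ (d - s - 1)" if "u \<in> F - B" "g \<in> f u - B" for u g
  proof -
    have "u \<noteq> g" using that f by blast
    then have "card (insert u (insert g B)) = s + 2" using that B by auto
    then show ?thesis using card_supersets_le[of "{1..n}" "d + 1" "insert u (insert g B)"] by simp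
  qed
  have card_diff: "card (F - B) = d + 1 - s" "\<And>u. u \<in> F - B \<Longrightarrow> card (f u - B) = d + 1 - s"
    using f B FF_memberD F(1) by (auto simp: card_Diff_subset)
  have "card {G\<in>FF. witness G = B} \<le> card (\<Union>u\<in>F - B. \<Union>g\<in>f u - B. ?S u g)"
    by (rule card_mono[OF _ cover]) (rule finite_subset[of _ "Pow {1..n}"]; auto)
  also have "\<dots> \<le> (\<Sum>u\<in>F - B. \<Sum>g\<in>f u - B. card (?S u g))"
    by (intro card_UN_le[THEN order_trans] sum_mono card_UN_le) (use F(1) FF_memberD f in auto)
  also have "\<dots> \<le> (\<Sum>u\<in>F - B. \<Sum>g\<in>f u - B. n ^ (d - s - 1))"
    by (intro sum_mono card_S)
  also have "\<dots> = (d + 1 - s) * (d + 1 - s) * n ^ (d - s - 1)"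
    using card_diff by simp
  finally show ?thesis unfolding B_def .
qed

lemma card_D0_le: "card D0 \<le> d\<^sup>2 * n ^ (d - 1)"
proof -
  let ?Bs = "{B. B \<subseteq> {1..n} \<and> card B = s}"
  have cover: "D0 \<subseteq> (\<Union>B\<in>?Bs. {F\<in>D0. witness F = B})"
  proof
    fix F assume "F \<in> D0"
    then have "F \<in> FF" using D_subset_FF(1) by blast
    then have "witness F \<in> ?Bs" using witnessD(1,2) FF_memberD(1) by blast
    then show "F \<in> (\<Union>B\<in>?Bs. {F\<in>D0. witness F = B})" using \<open>F \<in> D0\<close> by blast
  qed
  have each: "card {F\<in>D0. witness F = B} \<le> (d + 1 - s) * (d + 1 - s) * n ^ (d - s - 1)" for B
  proof (cases "{F\<in>D0. witness F = B} = {}")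
    case False
    then obtain F where F: "F \<in> D0" "witness F = B" by blast
    have "card {F\<in>D0. witness F = B} \<le> card {G\<in>FF. witness G = witness F}"
      using F D_subset_FF(1) finite_FF by (intro card_mono) auto
    with card_same_witness_le[OF F(1)] show ?thesis by linarith
  qed (metis card.empty le0)
  have "card D0 \<le> card (\<Union>B\<in>?Bs. {F\<in>D0. witness F = B})"
    by (rule card_mono[OF _ cover]) (use finite_D(1) in auto)
  also have "\<dots> \<le> (\<Sum>B\<in>?Bs. card {F\<in>D0. witness F = B})"
    by (rule card_UN_le) (auto intro: finite_subset[of _ "Pow {1..n}"])
  also have "\<dots> \<le> card ?Bs * ((d + 1 - s) * (d + 1 - s) * n ^ (d - s - 1))"
    using sum_mono[of ?Bs "\<lambda>B. card {F\<in>D0. witness F = B}", OF each] by simp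
  also have "card ?Bs \<le> n ^ s"
    using n_subsets[of "{1..n}" s] binomial_le_pow[of s n] d_ge n_ge by simp
  finally have "card D0 \<le> n ^ s * ((d + 1 - s) * (d + 1 - s) * n ^ (d - s - 1))"
    by (simp add: mult_right_mono)
  also have "\<dots> = (d + 1 - s) * (d + 1 - s) * n ^ (d - 1)"
    using s_pos d_ge by (simp add: power_add[symmetric])
  also have "\<dots> \<le> d\<^sup>2 * n ^ (d - 1)"
    using s_pos by (simp add: power2_eq_square mult_le_mono)
  finally show ?thesis .
qed

section \<open>Double counting facets\<close>

lemma FF_partition: "FF = D0 \<union> D1 \<union> D2"
proof -
  have "F \<in> D0 \<union> D1 \<union> D2" if "F \<in> FF" for F
    using that finite_open_facets[OF FF_memberD(3)[OF that]]
    unfolding D0_def D1_def D2_def by (cases "card (open_facets F)") auto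
  then show ?thesis using D_subset_FF by blast
qed

lemma D_disjoint: "D0 \<inter> D1 = {}" "D0 \<inter> D2 = {}" "D1 \<inter> D2 = {}"
  unfolding D0_def D1_def D2_def by auto

lemma card_FF: "card FF = card D0 + card D1 + card D2"
  by (subst FF_partition) (simp add: card_Un_disjoint finite_D D_disjoint Int_Un_distrib2)

lemma card_open_closed_facets:
  assumes "F \<in> FF" shows "card (open_facets F) + card (closed_facets F) = d + 1"
proof -
  have "open_facets F \<union> closed_facets F = {H. H \<subseteq> F \<and> card H = d}"
    "open_facets F \<inter> closed_facets F = {}"
    unfolding open_facets_def closed_facets_def by auto
  moreover have "finite (open_facets F)" "finite (closed_facets F)"
    using FF_memberD(3)[OF assms] unfolding open_facets_def closed_facets_def
    by (auto intro: finite_subset[of _ "Pow F"])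
  ultimately have "card (open_facets F) + card (closed_facets F) = card {H. H \<subseteq> F \<and> card H = d}"
    by (metis card_Un_disjoint)
  also have "\<dots> = d + 1"
    using n_subsets[OF FF_memberD(3)[OF assms], of d] FF_memberD(2)[OF assms] by simp
  finally show ?thesis .
qed

lemma card_FF_supersets_le:
  assumes "H \<subseteq> {1..n}" "card H = d"
  shows "card {F\<in>FF. H \<subseteq> F} \<le> n - d"
proof -
  have "{F\<in>FF. H \<subseteq> F} \<subseteq> {G. G \<subseteq> {1..n} \<and> card G = d + 1 \<and> H \<subseteq> G}"
    using FF_memberD by blast
  then have "card {F\<in>FF. H \<subseteq> F} \<le> card {G. G \<subseteq> {1..n} \<and> card G = d + 1 \<and> H \<subseteq> G}"
    by (rule card_mono[rotated]) (rule finite_subset[of _ "Pow {1..n}"]; auto)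
  also have "\<dots> = n - d"
    using card_supersets_eq[of "{1..n}" H "d + 1"] assms by (simp add: choose_one)
  finally show ?thesis .
qed

lemma sum_closed_facets_le: "(\<Sum>F\<in>FF. card (closed_facets F)) \<le> (n - d) * card closed_dsets"
proof -
  have "card (closed_facets F) = (\<Sum>H\<in>closed_dsets. if H \<subseteq> F then 1 else 0)" if "F \<in> FF" for F
  proof -
    have "closed_facets F = {H\<in>closed_dsets. H \<subseteq> F}"
      using FF_memberD(1)[OF that] unfolding closed_facets_def closed_dsets_def by auto
    then show ?thesis using sum.inter_filter[OF finite_closed_dsets, of "\<lambda>_. 1::nat"] by simp
  qed
  then have "(\<Sum>F\<in>FF. card (closed_facets F)) = (\<Sum>F\<in>FF. \<Sum>H\<in>closed_dsets. if H \<subseteq> F then 1 else 0)"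
    by (rule sum.cong[OF refl])
  also have "\<dots> = (\<Sum>H\<in>closed_dsets. card {F\<in>FF. H \<subseteq> F})"
    by (subst sum.swap, rule sum.cong[OF refl])
      (use sum.inter_filter[OF finite_FF, of "\<lambda>_. 1::nat"] in simp)
  also have "\<dots> \<le> (\<Sum>H\<in>closed_dsets. n - d)"
    by (intro sum_mono card_FF_supersets_le) (auto simp: closed_dsets_def)
  finally show ?thesis by (simp add: mult.commute)
qed

lemma card_open_closed_dsets: "card open_dsets + card closed_dsets = n choose d"
proof -
  have "open_dsets \<union> closed_dsets = {H. H \<subseteq> {1..n} \<and> card H = d}" "open_dsets \<inter> closed_dsets = {}"
    unfolding open_dsets_def closed_dsets_def by auto
  then show ?thesis
    using card_Un_disjoint[OF finite_open_dsets finite_closed_dsets] n_subsets[of "{1..n}" d] by simp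
qed

lemma card_UN_open_facets:
  assumes "D \<subseteq> FF" shows "card (\<Union> (open_facets ` D)) = (\<Sum>F\<in>D. card (open_facets F))"
proof (rule card_UN_disjoint)
  show "finite D" using assms finite_FF finite_subset by blast
  show "\<forall>F\<in>D. finite (open_facets F)" using assms FF_memberD(3) finite_open_facets by blast
  show "\<forall>F\<in>D. \<forall>F'\<in>D. F \<noteq> F' \<longrightarrow> open_facets F \<inter> open_facets F' = {}"
    using assms open_facets_disjoint by blast
qed

lemma card_good: "card good = card D1"
proof -
  have "card good = (\<Sum>F\<in>D1. card (open_facets F))"
    unfolding good_def using D_subset_FF(2) by (rule card_UN_open_facets)
  then show ?thesis unfolding D1_def by simp
qed

lemma card_open_dsets: "card open_dsets = card D1 + card bad"
proof -
  have "good \<subseteq> open_dsets" unfolding good_def using open_facets_subset D_subset_FF(2) by blast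
  then have "card bad = card open_dsets - card good"
    unfolding bad_def using finite_open_dsets by (simp add: card_Diff_subset finite_subset)
  moreover have "card good \<le> card open_dsets"
    using \<open>good \<subseteq> open_dsets\<close> finite_open_dsets by (rule card_mono[rotated])
  ultimately show ?thesis using card_good by simp
qed

lemma sum_open_facets: "(\<Sum>F\<in>FF. card (open_facets F)) = card D1 + (\<Sum>F\<in>D2. card (open_facets F))"
proof -
  have "(\<Sum>F\<in>FF. card (open_facets F))
      = (\<Sum>F\<in>D0. card (open_facets F)) + (\<Sum>F\<in>D1. card (open_facets F)) + (\<Sum>F\<in>D2. card (open_facets F))"
    by (subst FF_partition) (simp add: sum.union_disjoint finite_D D_disjoint Int_Un_distrib2)
  then show ?thesis unfolding D0_def D1_def by simp
qed

lemma sum_open_facets_D2_le: "(\<Sum>F\<in>D2. card (open_facets F)) \<le> card bad"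
proof -
  have "(\<Sum>F\<in>D2. card (open_facets F)) = card (\<Union> (open_facets ` D2))"
    using card_UN_open_facets[OF D_subset_FF(3)] by simp
  also have "\<dots> \<le> card bad"
  proof (rule card_mono[OF finite_bad], rule subsetI)
    fix H assume "H \<in> \<Union> (open_facets ` D2)"
    then obtain F where F: "F \<in> D2" "H \<in> open_facets F" by blast
    have "H \<notin> open_facets F'" if "F' \<in> D1" for F'
      using open_facets_disjoint[of F F'] F that D_subset_FF D_disjoint(3) by blast
    then show "H \<in> bad"
      unfolding bad_def good_def using F open_facets_subset D_subset_FF(3) by blast
  qed
  finally show ?thesis .
qed

lemma two_card_D2_le: "2 * card D2 \<le> card bad"
proof -
  have "(\<Sum>F\<in>D2. 2) \<le> (\<Sum>F\<in>D2. card (open_facets F))"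
    by (rule sum_mono) (simp add: D2_def)
  then show ?thesis using sum_open_facets_D2_le by (simp add: mult.commute)
qed

lemma facet_count:
  "(d + 1) * card FF = card D1 + (\<Sum>F\<in>D2. card (open_facets F)) + (\<Sum>F\<in>FF. card (closed_facets F))"
proof -
  have "(d + 1) * card FF = (\<Sum>F\<in>FF. card (open_facets F) + card (closed_facets F))"
    using card_open_closed_facets by simp
  then show ?thesis using sum_open_facets by (simp add: sum.distrib)
qed

text \<open>Double counting incidences between members and their facets: closed \<open>d\<close>-sets lie in at
  most \<open>n - d\<close> members, open ones in at most one, so a large family has few bad \<open>d\<close>-sets.\<close>

lemma bad_bound:
  "(real n - real d - 1) * card bad
     \<le> 2 * real n * (real ((n - 1) choose d) - card FF) + 2 * (real n - real d - 1) * card D0"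
proof -
  define a where "a = real n - real d"
  define T2 where "T2 = real (\<Sum>F\<in>D2. card (open_facets F))"
  define Sc where "Sc = real (\<Sum>F\<in>FF. card (closed_facets F))"
  have n_eq: "real n = a + real d" and a_ge: "a \<ge> 1" using n_ge unfolding a_def by auto
  have count: "real (d + 1) * card FF = card D1 + T2 + Sc"
    unfolding T2_def Sc_def using arg_cong[OF facet_count, of real] by (simp add: distrib_right)
  have "Sc \<le> real ((n - d) * card closed_dsets)"
    unfolding Sc_def using sum_closed_facets_le by (simp only: of_nat_le_iff)
  then have Sc_le: "Sc \<le> a * card closed_dsets" unfolding a_def using n_ge by (simp add: of_nat_diff)
  have closed: "real (card closed_dsets) = real (n choose d) - card D1 - card bad"
    using arg_cong[OF card_open_closed_dsets, of real] card_open_dsets by simp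
  have absorb: "a * real (n choose d) = real n * real ((n - 1) choose d)"
    unfolding a_def using arg_cong[OF binomial_absorb_comp[of n d], of real] n_ge by (simp add: of_nat_diff)
  have T2_le: "T2 \<le> card bad" unfolding T2_def using sum_open_facets_D2_le by (simp only: of_nat_le_iff)
  have D2_le: "(a - 1) * (2 * card D2) \<le> (a - 1) * card bad"
    using two_card_D2_le a_ge by (intro mult_left_mono) auto
  have "real n * card FF = (a - 1) * (card D0 + card D1 + card D2) + (card D1 + T2 + Sc)"
    using count arg_cong[OF card_FF, of real] n_eq by (simp add: algebra_simps)
  also have "\<dots> \<le> (a - 1) * (card D0 + card D1 + card D2) + card D1 + T2
      + a * (real (n choose d) - card D1 - card bad)"
    using Sc_le closed by simp
  also have "\<dots> = (a - 1) * card D0 + (a - 1) * card D2 + T2 + real n * real ((n - 1) choose d)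
      - a * card bad"
    using absorb by (simp add: algebra_simps)
  finally show ?thesis using T2_le D2_le unfolding a_def by (simp add: algebra_simps)
qed

lemma card_FF_le: "card FF \<le> ((n - 1) choose d) + card D0"
proof -
  have "0 \<le> (real n - real d - 1) * card bad" using n_ge by simp
  then have "0 \<le> 2 * real n * (real ((n - 1) choose d) - card FF) + 2 * (real n - real d - 1) * card D0"
    using bad_bound by linarith
  moreover have "2 * (real n - real d - 1) * card D0 \<le> 2 * real n * card D0"
    by (intro mult_right_mono) auto
  ultimately have "0 \<le> 2 * real n * (real ((n - 1) choose d) - card FF) + 2 * real n * card D0"
    by linarith
  then have "0 \<le> 2 * real n * (real ((n - 1) choose d) + card D0 - card FF)"
    by (simp add: algebra_simps)
  then show ?thesis using n_ge by (simp add: zero_le_mult_iff)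
qed

section \<open>Sources\<close>

lemma card_D1_avoiding_le:
  "card {F\<in>D1. X \<inter> F = {}} \<le> (\<Sum>y\<in>{1..n} - X. card (sources y)) * n ^ (d - s)"
proof -
  let ?S = "\<lambda>y B. {F. F \<subseteq> {1..n} \<and> card F = d + 1 \<and> insert y B \<subseteq> F}"
  have cover: "{F\<in>D1. X \<inter> F = {}} \<subseteq> (\<Union>y\<in>{1..n} - X. \<Union>B\<in>sources y. ?S y B)"
  proof
    fix F assume F: "F \<in> {F\<in>D1. X \<inter> F = {}}"
    then obtain x B where xB: "x \<in> F" "B \<in> sources x" "B \<subseteq> F" using D1_sourceE by blast
    have "F \<subseteq> {1..n}" "card F = d + 1" using F D_subset_FF(2) FF_memberD by auto
    then show "F \<in> (\<Union>y\<in>{1..n} - X. \<Union>B\<in>sources y. ?S y B)" using xB F by blast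
  qed
  have card_S: "card (?S y B) \<le> n ^ (d - s)" if "B \<in> sources y" for y B
  proof -
    have "card (insert y B) = s + 1"
      using that sources_memberD[OF that] finite_subset[of B "{1..n}"] unfolding sources_def by auto
    then show ?thesis using card_supersets_le[of "{1..n}" "d + 1" "insert y B"] by simp
  qed
  have "card {F\<in>D1. X \<inter> F = {}} \<le> card (\<Union>y\<in>{1..n} - X. \<Union>B\<in>sources y. ?S y B)"
    by (rule card_mono[OF _ cover]) (rule finite_subset[of _ "Pow {1..n}"]; auto)
  also have "\<dots> \<le> (\<Sum>y\<in>{1..n} - X. \<Sum>B\<in>sources y. card (?S y B))"
    by (intro card_UN_le[THEN order_trans] sum_mono card_UN_le finite_sources) simp
  also have "\<dots> \<le> (\<Sum>y\<in>{1..n} - X. \<Sum>B\<in>sources y. n ^ (d - s))"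
    by (intro sum_mono card_S)
  finally show ?thesis by (simp add: sum_distrib_right)
qed

lemma card_D1_le: "card D1 \<le> total_sources * n ^ (d - s)"
  using card_D1_avoiding_le[of "{}"] unfolding total_sources_def by simp

definition other_sources :: "nat \<Rightarrow> nat set set" where
  "other_sources x = (\<Union>y\<in>{1..n} - {x}. sources y)"

definition "source_pairs = (SIGMA x:{1..n}. sources x \<times> other_sources x)"

definition "separated_pairs = {(x, B, B') \<in> source_pairs. B' \<inter> insert x B = {}}"

lemma finite_other_sources: "finite (other_sources x)"
  unfolding other_sources_def using finite_sources by blast

lemma card_other_sources: "card (other_sources x) = (\<Sum>y\<in>{1..n} - {x}. card (sources y))"
  unfolding other_sources_def using finite_sources sources_disjoint by (intro card_UN_disjoint) auto

lemma finite_source_pairs: "finite source_pairs"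
  unfolding source_pairs_def using finite_sources finite_other_sources by blast

lemma card_source_pairs:
  "card source_pairs = (\<Sum>x\<in>{1..n}. card (sources x) * card (other_sources x))"
  unfolding source_pairs_def
  by (simp add: card_SigmaI finite_sources finite_other_sources card_cartesian_product)

lemma card_non_separated_pairs_le:
  "card (source_pairs - separated_pairs) \<le> total_sources * ((s + 1) * n ^ (s - 1))"
proof -
  let ?M = "\<lambda>x B. {B'. B' \<subseteq> {1..n} \<and> card B' = s \<and> B' \<inter> insert x B \<noteq> {}}"
  have cover: "source_pairs - separated_pairs \<subseteq> (SIGMA x:{1..n}. SIGMA B:sources x. ?M x B)"
  proof
    fix p assume "p \<in> source_pairs - separated_pairs"
    moreover obtain x B B' where x: "p = (x, B, B')" by (cases p)
    ultimately have p: "(x, B, B') \<in> source_pairs" "(x, B, B') \<notin> separated_pairs" by auto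
    then obtain y where "B' \<in> sources y"
      unfolding source_pairs_def other_sources_def by blast
    then have "B' \<subseteq> {1..n}" "card B' = s" by (rule sources_memberD)+
    then show "p \<in> (SIGMA x:{1..n}. SIGMA B:sources x. ?M x B)"
      using p x unfolding source_pairs_def separated_pairs_def by blast
  qed
  have finite_M: "finite (?M x B)" for x B
    by (rule finite_subset[of _ "Pow {1..n}"]) auto
  have card_M: "card (?M x B) \<le> (s + 1) * n ^ (s - 1)" if "B \<in> sources x" for x B
  proof -
    have B: "finite B" "card B = s"
      using sources_memberD[OF that] finite_subset[of B "{1..n}"] by auto
    have "card (?M x B) \<le> card (insert x B) * n ^ (s - 1)"
      using card_meeting_subsets_le[of "{1..n}" "insert x B" s] B(1) by simp
    also have "\<dots> \<le> (s + 1) * n ^ (s - 1)"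
      using B by (intro mult_right_mono) (simp_all add: card_insert_if)
    finally show ?thesis .
  qed
  have "finite (SIGMA x:{1..n}. SIGMA B:sources x. ?M x B)"
    using finite_M finite_sources by (intro finite_SigmaI) auto
  then have "card (source_pairs - separated_pairs) \<le> card (SIGMA x:{1..n}. SIGMA B:sources x. ?M x B)"
    using cover by (rule card_mono)
  also have "\<dots> = (\<Sum>x\<in>{1..n}. \<Sum>B\<in>sources x. card (?M x B))"
    using finite_M finite_sources by (simp add: card_SigmaI)
  also have "\<dots> \<le> (\<Sum>x\<in>{1..n}. \<Sum>B\<in>sources x. (s + 1) * n ^ (s - 1))"
    by (intro sum_mono card_M)
  finally show ?thesis by (simp add: total_sources_def sum_distrib_right)
qed

lemma separated_pairsE:
  assumes "p \<in> separated_pairs"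
  obtains x B B' y where "p = (x, B, B')" "x \<in> {1..n}" "B \<in> sources x"
    "y \<noteq> x" "B' \<in> sources y" "B' \<inter> insert x B = {}"
  using assms unfolding separated_pairs_def source_pairs_def other_sources_def by blast

lemma union_in_bad:
  assumes "(x, B, B') \<in> separated_pairs" "B' \<subseteq> W" "W \<subseteq> {1..n} - insert x B" "card W = d - s"
  shows "B \<union> W \<in> bad"
proof -
  obtain y where y: "x \<in> {1..n}" "B \<in> sources x" "y \<noteq> x" "B' \<in> sources y"
    using separated_pairsE[OF assms(1)] by (metis prod.inject)
  have B: "B \<subseteq> {1..n}" "card B = s" "x \<notin> B" "forces B x"
    using sources_memberD[OF y(2)] y(2) unfolding sources_def by auto
  have B': "card B' = s" "y \<notin> B'" "forces B' y" using y(4) unfolding sources_def by auto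
  have "card (B \<union> W) = d"
    using B assms(3,4) d_ge finite_subset[of B "{1..n}"] finite_subset[of W "{1..n}"]
    by (subst card_Un_disjoint) auto
  moreover have "is_open (B \<union> W)" unfolding is_open_def using B assms(3) by blast
  ultimately have "B \<union> W \<in> open_dsets" unfolding open_dsets_def using B(1) assms(3) by blast
  moreover have "B \<union> W \<notin> open_facets F" if "F \<in> D1" for F
  proof
    assume "B \<union> W \<in> open_facets F"
    then have "B \<subseteq> F" "B' \<subseteq> F" using assms(2) unfolding open_facets_def by auto
    then have "x = y" using D1_forced_point_unique[OF that _ B(2,3,4) _ B'] by blast
    with y(3) show False by simp
  qed
  ultimately show ?thesis unfolding bad_def good_def by blast
qed

definition extensions :: "nat \<times> nat set \<times> nat set \<Rightarrow> nat set set" where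
  "extensions = (\<lambda>(x, B, B'). {W. W \<subseteq> {1..n} - insert x B \<and> card W = d - s \<and> B' \<subseteq> W})"

definition "extended_pairs = (SIGMA p:separated_pairs. extensions p)"

lemma card_extensions:
  assumes "p \<in> separated_pairs"
  shows "card (extensions p) = (n - 2 * s - 1) choose (d - 2 * s)"
proof -
  obtain x B B' y where p: "p = (x, B, B')" "x \<in> {1..n}" "B \<in> sources x"
    "y \<noteq> x" "B' \<in> sources y" "B' \<inter> insert x B = {}"
    using separated_pairsE[OF assms] by blast
  have B: "B \<subseteq> {1..n}" "card B = s" "x \<notin> B" "finite B"
    using sources_memberD[OF p(3)] p(3) finite_subset[of B "{1..n}"] unfolding sources_def by auto
  have A: "card ({1..n} - insert x B) = n - s - 1"
    using B p(2) by (simp add: card_Diff_subset)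
  have "B' \<subseteq> {1..n} - insert x B" "card B' = s" using sources_memberD[OF p(5)] p(6) by auto
  then show ?thesis
    unfolding p(1) extensions_def using card_supersets_eq[of "{1..n} - insert x B" B' "d - s"] A d_ge
    by (simp add: diff_diff_add mult_2)
qed

text \<open>A separated pair \<open>(x, B, B')\<close> with an extension \<open>W\<close> is recovered from the bad set \<open>B \<union> W\<close>
  and its subsets \<open>B\<close> and \<open>B'\<close>, because \<open>B\<close> is a source of \<open>x\<close> only.\<close>

lemma inj_extended_pairs:
  defines "f \<equiv> \<lambda>((x :: nat, B :: nat set, B' :: nat set), W). (B \<union> W, B, B')"
  shows "inj_on f extended_pairs"
    and "f ` extended_pairs \<subseteq> (SIGMA G:bad. Pow G \<times> Pow G)"
proof -
  show "inj_on f extended_pairs"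
  proof (rule inj_onI)
    fix q1 q2 assume q: "q1 \<in> extended_pairs" "q2 \<in> extended_pairs" and eq: "f q1 = f q2"
    obtain x1 B1 B1' W1 x2 B2 B2' W2
      where q_eq: "q1 = ((x1, B1, B1'), W1)" "q2 = ((x2, B2, B2'), W2)"
      by (cases q1, cases q2) (metis prod_cases3)
    have "B1 \<in> sources x1" "B2 \<in> sources x2" "W1 \<inter> B1 = {}" "W2 \<inter> B2 = {}"
      using q unfolding q_eq extended_pairs_def extensions_def separated_pairs_def source_pairs_def
      by auto
    moreover have "B1 \<union> W1 = B2 \<union> W2" "B1 = B2" "B1' = B2'" using eq unfolding q_eq f_def by auto
    ultimately show "q1 = q2" unfolding q_eq using sources_disjoint[of x1 x2] by blast
  qed
  show "f ` extended_pairs \<subseteq> (SIGMA G:bad. Pow G \<times> Pow G)"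
  proof
    fix q assume "q \<in> f ` extended_pairs"
    then obtain p W where q: "q = f (p, W)" "(p, W) \<in> extended_pairs" by auto
    obtain x B B' where p: "p = (x, B, B')" by (cases p)
    have "(x, B, B') \<in> separated_pairs" "B' \<subseteq> W" "W \<subseteq> {1..n} - insert x B" "card W = d - s"
      using q(2) unfolding p extended_pairs_def extensions_def by auto
    then show "q \<in> (SIGMA G:bad. Pow G \<times> Pow G)"
      using union_in_bad unfolding q(1) p f_def by auto
  qed
qed

lemma card_separated_pairs_le:
  "card separated_pairs * ((n - 2 * s - 1) choose (d - 2 * s)) \<le> 4 ^ d * card bad"
proof -
  have finite_extensions: "finite (extensions p)" for p
    unfolding extensions_def by (cases p) (auto intro: finite_subset[of _ "Pow {1..n}"])
  have "finite separated_pairs"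
    using finite_source_pairs by (rule finite_subset[rotated]) (auto simp: separated_pairs_def)
  then have "card separated_pairs * ((n - 2 * s - 1) choose (d - 2 * s)) = card extended_pairs"
    unfolding extended_pairs_def using finite_extensions card_extensions by (simp add: card_SigmaI)
  also have "\<dots> \<le> card (SIGMA G:bad. Pow G \<times> Pow G)"
    using finite_bad bad_memberD(2) by (intro card_inj_on_le[OF inj_extended_pairs]) blast
  also have "\<dots> = (\<Sum>G\<in>bad. 2 ^ d * 2 ^ d)"
    using finite_bad bad_memberD by (simp add: card_SigmaI card_cartesian_product card_Pow)
  finally show ?thesis by (simp add: power_mult_distrib[symmetric] mult.commute)
qed

text \<open>Choosing \<open>x\<close> with the most sources makes every \<open>other_sources y\<close> at least as large as
  \<open>other_sources x\<close>.\<close>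

lemma total_sources_mult_le:
  assumes "x \<in> {1..n}" "\<And>y. y \<in> {1..n} \<Longrightarrow> card (sources y) \<le> card (sources x)"
  shows "total_sources * card (other_sources x)
    \<le> card separated_pairs + total_sources * ((s + 1) * n ^ (s - 1))"
proof -
  have "card (other_sources x) \<le> card (other_sources y)" if "y \<in> {1..n}" for y
  proof -
    have "card (sources z) + card (other_sources z) = total_sources" if "z \<in> {1..n}" for z
      using that unfolding total_sources_def card_other_sources by (simp add: sum.remove)
    then have "card (sources y) + card (other_sources y) = card (sources x) + card (other_sources x)"
      using that assms(1) by presburger
    then show ?thesis using assms(2)[OF that] by linarith
  qed
  then have "total_sources * card (other_sources x) \<le> card source_pairs"
    unfolding total_sources_def card_source_pairs sum_distrib_right by (intro sum_mono) simp
  also have "\<dots> = card (separated_pairs \<union> (source_pairs - separated_pairs))"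
    by (rule arg_cong[of _ _ card]) (auto simp: separated_pairs_def)
  also have "\<dots> \<le> card separated_pairs + card (source_pairs - separated_pairs)"
    by (rule card_Un_le)
  finally show ?thesis using card_non_separated_pairs_le by linarith
qed

lemma pow_le_binomial_scaled:
  "real n ^ d \<le> (2 * real d) ^ d * real ((n - 1) choose d)"
  "real n ^ (d - 2 * s) \<le> (2 * real d) ^ d * real ((n - 2 * s - 1) choose (d - 2 * s))"
proof -
  have d_pos: "real d > 0" using s_pos d_ge by simp
  show "real n ^ d \<le> (2 * real d) ^ d * real ((n - 1) choose d)"
    using n_ge d_pos by (intro binomial_ge_pow_scaled) (auto simp: of_nat_diff algebra_simps)
  have "real n * real (d - 2 * s) \<le> 2 * real d * real (n - 2 * s - 1)"
  proof -
    have "real n * real (d - 2 * s) \<le> real n * real d" by (simp add: mult_left_mono)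
    also have "\<dots> \<le> real n * real d + real d * (real n - 2 - 4 * real s)"
      using n_ge d_ge by (intro add_increasing2 mult_nonneg_nonneg) auto
    also have "\<dots> = 2 * real d * real (n - 2 * s - 1)"
      using n_ge d_ge by (simp add: of_nat_diff algebra_simps)
    finally show ?thesis .
  qed
  then have "real n ^ (d - 2 * s) \<le> (2 * real d) ^ (d - 2 * s) * real ((n - 2 * s - 1) choose (d - 2 * s))"
    using n_ge d_pos by (intro binomial_ge_pow_scaled) auto
  also have "\<dots> \<le> (2 * real d) ^ d * real ((n - 2 * s - 1) choose (d - 2 * s))"
    using d_pos s_pos d_ge by (intro mult_right_mono power_increasing) auto
  finally show "real n ^ (d - 2 * s) \<le> (2 * real d) ^ d * real ((n - 2 * s - 1) choose (d - 2 * s))" .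
qed

lemma card_other_sources_le:
  assumes x: "x \<in> {1..n}" "\<And>y. y \<in> {1..n} \<Longrightarrow> card (sources y) \<le> card (sources x)"
    and many: "real n ^ s \<le> 2 * (2 * real d) ^ d * total_sources"
  shows "card (other_sources x) * real n ^ (d - s)
    \<le> 2 * (2 * real d) ^ (2 * d) * 4 ^ d * card bad + (s + 1) * real n ^ (d - 1)"
proof -
  define A where "A = (2 * real d) ^ d"
  define Sg where "Sg = real total_sources"
  define Cb where "Cb = real ((n - 2 * s - 1) choose (d - 2 * s))"
  define sep where "sep = real (card separated_pairs)"
  have "0 < real n" using n_ge by simp
  then have "0 < 2 * A * Sg" using many unfolding A_def Sg_def
    by (meson less_le_trans zero_less_power)
  moreover have "0 \<le> A" unfolding A_def by simp
  ultimately have Sg_pos: "Sg > 0" by (simp add: zero_less_mult_iff)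
  have "real (total_sources * card (other_sources x))
      \<le> real (card separated_pairs + total_sources * ((s + 1) * n ^ (s - 1)))"
    using total_sources_mult_le[OF x] by (simp only: of_nat_le_iff)
  then have pairs: "Sg * card (other_sources x) \<le> sep + Sg * ((s + 1) * real n ^ (s - 1))"
    unfolding Sg_def sep_def by (simp add: algebra_simps)
  have "real (card separated_pairs * ((n - 2 * s - 1) choose (d - 2 * s))) \<le> real (4 ^ d * card bad)"
    using card_separated_pairs_le by (simp only: of_nat_le_iff)
  then have sep_Cb: "sep * Cb \<le> 4 ^ d * card bad"
    unfolding sep_def Cb_def by simp
  have pow_eq: "real n ^ (s - 1) * real n ^ (d - s) = real n ^ (d - 1)"
    "real n ^ (d - 2 * s) * real n ^ s = real n ^ (d - s)"
    using s_pos d_ge by (simp_all flip: power_add)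
  have "Sg * (card (other_sources x) * real n ^ (d - s))
      \<le> (sep + Sg * ((s + 1) * real n ^ (s - 1))) * real n ^ (d - s)"
    using mult_right_mono[OF pairs, of "real n ^ (d - s)"] by (simp add: mult.assoc)
  also have "\<dots> = sep * real n ^ (d - 2 * s) * real n ^ s + Sg * ((s + 1) * real n ^ (d - 1))"
    using pow_eq by (simp add: algebra_simps)
  also have "\<dots> \<le> sep * (A * Cb) * (2 * A * Sg) + Sg * ((s + 1) * real n ^ (d - 1))"
    using pow_le_binomial_scaled(2) many unfolding A_def Cb_def Sg_def sep_def
    by (intro add_mono mult_mono) auto
  also have "\<dots> = 2 * A\<^sup>2 * (sep * Cb) * Sg + Sg * ((s + 1) * real n ^ (d - 1))"
    by (simp add: power2_eq_square algebra_simps)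
  also have "\<dots> \<le> 2 * A\<^sup>2 * (4 ^ d * card bad) * Sg + Sg * ((s + 1) * real n ^ (d - 1))"
    using sep_Cb Sg_pos by (intro add_mono mult_right_mono mult_left_mono) auto
  finally have "Sg * (card (other_sources x) * real n ^ (d - s))
      \<le> Sg * (2 * A\<^sup>2 * 4 ^ d * card bad + (s + 1) * real n ^ (d - 1))"
    by (simp add: algebra_simps)
  moreover have "A\<^sup>2 = (2 * real d) ^ (2 * d)"
    unfolding A_def by (metis power_mult mult.commute)
  ultimately show ?thesis using Sg_pos by simp
qed

definition star :: "nat \<Rightarrow> nat set set" where
  "star x = {F. F \<subseteq> {1..n} \<and> card F = d + 1 \<and> x \<in> F}"

lemma card_star: "x \<in> {1..n} \<Longrightarrow> card (star x) = (n - 1) choose d"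
  using card_supersets_eq[of "{1..n}" "{x}" "d + 1"] unfolding star_def by simp

lemma card_symdiff_star_le:
  assumes "x \<in> {1..n}"
  shows "card ((FF - star x) \<union> (star x - FF)) + card FF \<le> 2 * card (FF - star x) + ((n - 1) choose d)"
proof -
  have "finite (star x)" unfolding star_def by (rule finite_subset[of _ "Pow {1..n}"]) auto
  then have "card (star x - FF) + card (FF \<inter> star x) = card (star x)"
    using card_Int_Diff[of "star x" FF] by (simp add: Int_commute)
  moreover have "card (FF - star x) + card (FF \<inter> star x) = card FF"
    using card_Int_Diff[OF finite_FF, of "star x"] by simp
  ultimately show ?thesis
    using card_Un_le[of "FF - star x" "star x - FF"] card_star[OF assms] by linarith
qed

lemma card_FF_diff_star_le:
  "card (FF - star x) \<le> card D0 + card D2 + card (other_sources x) * n ^ (d - s)"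
proof -
  have "FF - star x \<subseteq> D0 \<union> D2 \<union> {F\<in>D1. {x} \<inter> F = {}}"
    using FF_partition FF_memberD unfolding star_def by blast
  then have "card (FF - star x) \<le> card (D0 \<union> D2 \<union> {F\<in>D1. {x} \<inter> F = {}})"
    by (rule card_mono[rotated]) (simp add: finite_D)
  also have "\<dots> \<le> card D0 + card D2 + card {F\<in>D1. {x} \<inter> F = {}}"
    using card_Un_le[of "D0 \<union> D2" "{F\<in>D1. {x} \<inter> F = {}}"] card_Un_le[of D0 D2] by linarith
  finally have "card (FF - star x) \<le> card D0 + card D2 + card {F\<in>D1. {x} \<inter> F = {}}" .
  then show ?thesis
    using card_D1_avoiding_le[of "{x}"] card_other_sources[of x] by simp
qed

end

section \<open>Bounding the symmetric difference\<close>

definition bad_const :: "nat \<Rightarrow> real" where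
  "bad_const d = 4 + 2 * real d ^ 2"

text \<open>The two summands bound the symmetric difference when \<open>(n - 1) choose d\<close> is small,
  resp. large, compared with \<open>(K + 1) n ^ (d - 1)\<close>.\<close>

definition witness_const :: "nat \<Rightarrow> real" where
  "witness_const d = (4 * (1 + real d ^ 2 + bad_const d) + 2 * real d ^ 2 + 1)
     + (2 * real d ^ 2 + bad_const d + 4 * (2 * real d) ^ (2 * d) * 4 ^ d * bad_const d + 2 * real d + 1)"

context s_witness_setting
begin

context
  fixes K :: real
  assumes K_nonneg: "K \<ge> 0"
    and card_FF_ge: "real ((n - 1) choose d) - K * real n ^ (d - 1) \<le> card FF"
begin

lemma pow_le_scaled:
  "real n ^ (d - 1) \<le> (K + 1) * real n ^ (d - 1)" "K * real n ^ (d - 1) \<le> (K + 1) * real n ^ (d - 1)"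
  using mult_nonneg_nonneg[OF K_nonneg, of "real n ^ (d - 1)"] by (simp_all add: algebra_simps)

lemma card_D0_le_scaled: "real (card D0) \<le> real d ^ 2 * ((K + 1) * real n ^ (d - 1))"
proof -
  have "real (card D0) \<le> real (d\<^sup>2 * n ^ (d - 1))"
    using card_D0_le by (simp only: of_nat_le_iff)
  also have "\<dots> \<le> real d ^ 2 * ((K + 1) * real n ^ (d - 1))"
    using pow_le_scaled(1) by (simp add: mult_left_mono)
  finally show ?thesis .
qed

lemma card_bad_le: "real (card bad) \<le> bad_const d * ((K + 1) * real n ^ (d - 1))"
proof -
  define p where "p = real n ^ (d - 1)"
  define m where "m = real n - real d - 1"
  have m_pos: "m > 0" and two_n: "2 * real n \<le> 4 * m" using n_ge unfolding m_def by auto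
  have Kp: "0 \<le> K * p" "0 \<le> p" using K_nonneg unfolding p_def by auto
  have "m * card bad \<le> 2 * real n * (real ((n - 1) choose d) - card FF) + 2 * m * card D0"
    using bad_bound unfolding m_def .
  also have "\<dots> \<le> 2 * real n * (K * p) + 2 * m * card D0"
    using card_FF_ge m_pos unfolding p_def by (intro add_mono mult_left_mono) auto
  also have "\<dots> \<le> m * (4 * (K * p) + 2 * card D0)"
    using mult_right_mono[OF two_n Kp(1)] by (simp add: algebra_simps)
  finally have "card bad \<le> 4 * (K * p) + 2 * card D0"
    using m_pos by simp
  moreover have "bad_const d * ((K + 1) * p) = 4 * (K * p) + 4 * p + 2 * (real d ^ 2 * ((K + 1) * p))"
    unfolding bad_const_def by (simp add: algebra_simps)
  ultimately show ?thesis using card_D0_le_scaled Kp unfolding p_def by linarith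
qed

lemma many_sources:
  assumes "2 * (1 + real d ^ 2 + bad_const d) * ((K + 1) * real n ^ (d - 1)) < real ((n - 1) choose d)"
  shows "real n ^ s \<le> 2 * (2 * real d) ^ d * total_sources"
proof -
  define E where "E = (K + 1) * real n ^ (d - 1)"
  define A where "A = (2 * real d) ^ d"
  have bad_E: "0 \<le> bad_const d * E"
    unfolding bad_const_def E_def using K_nonneg by simp
  have "2 * real (card D2) \<le> card bad" using two_card_D2_le by simp
  then have D2: "real (card D2) \<le> bad_const d * E"
    using card_bad_le bad_E unfolding E_def by linarith
  have "real (card D1) = card FF - card D0 - card D2" using card_FF by simp
  moreover have "2 * (1 + real d ^ 2 + bad_const d) * E = 2 * E + 2 * (real d ^ 2 * E) + 2 * (bad_const d * E)"
    by (simp add: algebra_simps)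
  ultimately have "real ((n - 1) choose d) \<le> 2 * real (card D1)"
    using card_FF_ge pow_le_scaled(2) D2 card_D0_le_scaled assms unfolding E_def by linarith
  also have "\<dots> \<le> 2 * real (total_sources * n ^ (d - s))"
    using card_D1_le by (simp only: of_nat_le_iff mult_le_cancel_left_pos zero_less_numeral)
  finally have "real n ^ d \<le> A * (2 * real (total_sources * n ^ (d - s)))"
    using pow_le_binomial_scaled(1) unfolding A_def
    by (meson order_trans mult_left_mono zero_le_power mult_nonneg_nonneg of_nat_0_le_iff zero_le_numeral)
  moreover have "real n ^ d = real n ^ s * real n ^ (d - s)"
    using d_ge by (simp flip: power_add)
  ultimately have "real n ^ s * real n ^ (d - s) \<le> (2 * A * total_sources) * real n ^ (d - s)"
    by (simp add: algebra_simps)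
  then show ?thesis using n_ge unfolding A_def by simp
qed

lemma card_symdiff_star_le_scaled:
  assumes "x \<in> {1..n}"
  shows "real (card ((FF - star x) \<union> (star x - FF)))
    \<le> 2 * real (card (FF - star x)) + (K + 1) * real n ^ (d - 1)"
proof -
  have "real (card ((FF - star x) \<union> (star x - FF)) + card FF)
      \<le> real (2 * card (FF - star x) + ((n - 1) choose d))"
    using card_symdiff_star_le[OF assms] by (simp only: of_nat_le_iff)
  then show ?thesis using card_FF_ge pow_le_scaled(2) by linarith
qed

lemma card_symdiff_star_le_small:
  assumes "x \<in> {1..n}"
    and "real ((n - 1) choose d) \<le> 2 * (1 + real d ^ 2 + bad_const d) * ((K + 1) * real n ^ (d - 1))"
  shows "real (card ((FF - star x) \<union> (star x - FF)))
    \<le> (4 * (1 + real d ^ 2 + bad_const d) + 2 * real d ^ 2 + 1) * ((K + 1) * real n ^ (d - 1))"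
proof -
  have "card (FF - star x) \<le> ((n - 1) choose d) + card D0"
    using card_FF_le card_mono[OF finite_FF, of "FF - star x"] by auto
  then have "real (card (FF - star x)) \<le> real ((n - 1) choose d) + card D0"
    by (simp flip: of_nat_add)
  then show ?thesis
    using card_symdiff_star_le_scaled[OF assms(1)] assms(2) card_D0_le_scaled
    by (simp add: algebra_simps)
qed

lemma card_symdiff_star_le_large:
  assumes x: "x \<in> {1..n}" "\<And>y. y \<in> {1..n} \<Longrightarrow> card (sources y) \<le> card (sources x)"
    and "2 * (1 + real d ^ 2 + bad_const d) * ((K + 1) * real n ^ (d - 1)) < real ((n - 1) choose d)"
  shows "real (card ((FF - star x) \<union> (star x - FF)))
    \<le> (2 * real d ^ 2 + bad_const d + 4 * (2 * real d) ^ (2 * d) * 4 ^ d * bad_const d + 2 * real d + 1)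
       * ((K + 1) * real n ^ (d - 1))"
proof -
  define E where "E = (K + 1) * real n ^ (d - 1)"
  have E: "real n ^ (d - 1) \<le> E" "0 \<le> E" using pow_le_scaled K_nonneg unfolding E_def by auto
  have bad: "0 \<le> bad_const d" "real (card bad) \<le> bad_const d * E"
    using card_bad_le unfolding E_def bad_const_def by auto
  have "real (card (other_sources x)) * real n ^ (d - s)
      \<le> 2 * (2 * real d) ^ (2 * d) * 4 ^ d * card bad + (s + 1) * real n ^ (d - 1)"
    using card_other_sources_le[OF x many_sources[OF assms(3)]] .
  also have "\<dots> \<le> 2 * (2 * real d) ^ (2 * d) * 4 ^ d * (bad_const d * E) + real d * E"
    using bad E s_pos d_ge by (intro add_mono mult_left_mono mult_mono) auto
  finally have others: "real (card (other_sources x)) * real n ^ (d - s)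
      \<le> 2 * (2 * real d) ^ (2 * d) * 4 ^ d * (bad_const d * E) + real d * E" .
  have "real (card (FF - star x)) \<le> real (card D0 + card D2 + card (other_sources x) * n ^ (d - s))"
    using card_FF_diff_star_le by (simp only: of_nat_le_iff)
  moreover have "2 * real (card D2) \<le> card bad" using two_card_D2_le by simp
  ultimately show ?thesis
    using card_symdiff_star_le_scaled[OF x(1)] others bad card_D0_le_scaled
    unfolding E_def by (simp add: algebra_simps)
qed

lemma exists_close_star:
  "\<exists>x\<in>{1..n}. real (card ((FF - star x) \<union> (star x - FF))) \<le> witness_const d * (K + 1) * real n ^ (d - 1)"
proof -
  obtain x where x: "x \<in> {1..n}" "Max ((\<lambda>y. card (sources y)) ` {1..n}) = card (sources x)"
    using obtains_MAX[of "{1..n}" "\<lambda>y. card (sources y)"] n_ge by auto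
  have x_max: "card (sources y) \<le> card (sources x)" if "y \<in> {1..n}" for y
    unfolding x(2)[symmetric] using that by (intro Max_ge) auto
  define E where "E = (K + 1) * real n ^ (d - 1)"
  define a where "a = 4 * (1 + real d ^ 2 + bad_const d) + 2 * real d ^ 2 + 1"
  define b where "b = 2 * real d ^ 2 + bad_const d + 4 * (2 * real d) ^ (2 * d) * 4 ^ d * bad_const d + 2 * real d + 1"
  have "0 \<le> E" "0 \<le> a" "0 \<le> b"
    using K_nonneg unfolding E_def a_def b_def bad_const_def by auto
  then have "a * E \<le> witness_const d * E" "b * E \<le> witness_const d * E"
    unfolding witness_const_def a_def[symmetric] b_def[symmetric] by (simp_all add: mult_right_mono)
  moreover have "real (card ((FF - star x) \<union> (star x - FF))) \<le> a * E \<or>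
      real (card ((FF - star x) \<union> (star x - FF))) \<le> b * E"
    using card_symdiff_star_le_small[OF x(1)] card_symdiff_star_le_large[OF x(1) x_max]
    unfolding a_def b_def E_def by linarith
  ultimately have "real (card ((FF - star x) \<union> (star x - FF))) \<le> witness_const d * E"
    by linarith
  then show ?thesis using x(1) unfolding E_def by (auto simp: mult.assoc)
qed

end

end

theorem proposition2p7:
  fixes d :: nat
  shows "\<exists>C::real. \<forall>s n (K::real) (\<F>::nat set set).
    1 \<le> s \<longrightarrow> d \<ge> 2 * s \<longrightarrow> n \<ge> 2 * (d + 1) \<longrightarrow> K \<ge> 0 \<longrightarrow>
    \<F> \<subseteq> {F. F \<subseteq> {1..n} \<and> card F = d + 1} \<longrightarrow>
    s_witness_family s \<F> \<longrightarrow>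
    real (card \<F>) \<ge> real ((n - 1) choose d) - K * real n ^ (d - 1) \<longrightarrow>
    (\<exists>x0\<in>{1..n}. let star = {F. F \<subseteq> {1..n} \<and> card F = d + 1 \<and> x0 \<in> F} in real (card ((\<F> - star) \<union> (star - \<F>)))
        \<le> C * (K + 1) * real n ^ (d - 1))"
proof (rule exI[of _ "witness_const d"], intro allI impI)
  fix s n :: nat and K :: real and FF :: "nat set set"
  assume "1 \<le> s" "2 * s \<le> d" "2 * (d + 1) \<le> n" and K: "0 \<le> K"
    and "FF \<subseteq> {F. F \<subseteq> {1..n} \<and> card F = d + 1}" "s_witness_family s FF"
    and large: "real ((n - 1) choose d) - K * real n ^ (d - 1) \<le> real (card FF)"
  then interpret s_witness_setting n d s FF by unfold_locales
  show "\<exists>x0\<in>{1..n}. let star = {F. F \<subseteq> {1..n} \<and> card F = d + 1 \<and> x0 \<in> F}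
    in real (card ((FF - star) \<union> (star - FF))) \<le> witness_const d * (K + 1) * real n ^ (d - 1)"
    using exists_close_star[OF K large] unfolding star_def Let_def .
qed

end
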